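(* For every integer $n\ge0$: $a_{5,0}(4n)=a_5(4n)$, $a_{5,0}(4n+1)=a_5(4n+1)$, $a_{5,0}(4n+2)=0$, and $a_{5,0}(4n+3)=a_5(n)$.
   Context: For a partition $\pi$, $\pi'$ is its conjugate, $\mathcal O(\pi)$ the number of odd parts, and $\mathrm{srank}(\pi)=\mathcal O(\pi)-\mathcal O(\pi')$. A 5-core is a partition with no rim hook (border strip) of length $5$. $a_5(n)$ is the number of partitions of $n$ that are 5-cores, and $a_{5,0}(n)$ is the number of 5-cores of $n$ with $\mathrm{srank}\equiv0\pmod4$. *)

theory Defs
  imports Main
begin

definition is_partition :: "nat \<Rightarrow> nat list \<Rightarrow> bool" where
  "is_partition n p \<longleftrightarrow> sorted_wrt (\<ge>) p \<and> (\<forall>x\<in>set p. 0 < x) \<and> sum_list p = n"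

definition partitions :: "nat \<Rightarrow> nat list set" where
  "partitions n = {p. is_partition n p}"

definition conjugate :: "nat list \<Rightarrow> nat list" where
  "conjugate p = map (\<lambda>j. length (filter (\<lambda>x. j < x) p)) [0..<foldr max p 0]"

definition num_odd :: "nat list \<Rightarrow> nat" where
  "num_odd p = length (filter odd p)"

definition srank :: "nat list \<Rightarrow> int" where
  "srank p = int (num_odd p) - int (num_odd (conjugate p))"

definition diagram :: "nat list \<Rightarrow> (nat \<times> nat) set" where
  "diagram p = {(i, j). i < length p \<and> j < p ! i}"

definition adjacent_cells :: "nat \<times> nat \<Rightarrow> nat \<times> nat \<Rightarrow> bool" where
  "adjacent_cells a b \<longleftrightarrow>
     (fst a = fst b \<and> (snd a = Suc (snd b) \<or> snd b = Suc (snd a))) \<or>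
     (snd a = snd b \<and> (fst a = Suc (fst b) \<or> fst b = Suc (fst a)))"

definition cells_connected :: "(nat \<times> nat) set \<Rightarrow> bool" where
  "cells_connected S \<longleftrightarrow>
     (\<forall>a\<in>S. \<forall>b\<in>S. (\<lambda>x y. x \<in> S \<and> y \<in> S \<and> adjacent_cells x y)\<^sup>*\<^sup>* a b)"

definition contains_2x2 :: "(nat \<times> nat) set \<Rightarrow> bool" where
  "contains_2x2 S \<longleftrightarrow> (\<exists>i j. (i, j) \<in> S \<and> (Suc i, j) \<in> S \<and> (i, Suc j) \<in> S \<and> (Suc i, Suc j) \<in> S)"

definition has_rim_hook :: "nat \<Rightarrow> nat list \<Rightarrow> bool" where
  "has_rim_hook t p \<longleftrightarrow>
     (\<exists>q m. is_partition m q \<and> diagram q \<subseteq> diagram p \<and>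
        card (diagram p - diagram q) = t \<and>
        cells_connected (diagram p - diagram q) \<and>
        \<not> contains_2x2 (diagram p - diagram q))"

definition is_core :: "nat \<Rightarrow> nat list \<Rightarrow> bool" where
  "is_core t p \<longleftrightarrow> \<not> has_rim_hook t p"

definition a5 :: "nat \<Rightarrow> nat" where
  "a5 n = card {p \<in> partitions n. is_core 5 p}"

definition a50 :: "nat \<Rightarrow> nat" where
  "a50 n = card {p \<in> partitions n. is_core 5 p \<and> srank p mod 4 = 0}"

end

theory Submission
  imports Defs "HOL-Library.More_List"
begin

(* A partition p is encoded by its Maya diagram {p_k - k - 1 | k \<ge> 0}.  Removing a rim hook of
   length t moves one bead of the diagram from x to x - t, so p is a t-core iff its Maya diagram
   is closed under x \<mapsto> x - t, i.e. is the t-abacus with runner levels a_0, ..., a_(t-1) of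
   sum 0.  Counting beads runner by runner gives 2n = \<Sum> (2 r a_r + t a_r (a_r - 1)), and, since
   srank p \<equiv> n - \<Sum>{(-1)^k | p_k odd} (mod 4), for odd t also expresses srank mod 4 through the
   a_r.  For t = 5 everything modulo 4 depends only on the parities of the a_r and of one more
   sum, and a check of the 64 cases gives the claims for n \<equiv> 0, 1, 2 (mod 4).  For n \<equiv> 3 the
   counted vectors are those with parity pattern (even, odd, even, odd, even), and lift_vector
   maps the 5-core vectors of (n - 3) / 4 bijectively onto them. *)

section \<open>Maya diagrams\<close>

lemma diagram_eq_nth_default: "diagram p = {(i, j). j < nth_default 0 p i}"
  by (auto simp: diagram_def nth_default_def split: if_splits)

lemma diagram_subset_iff:
  "diagram q \<subseteq> diagram p \<longleftrightarrow> (\<forall>i. nth_default 0 q i \<le> nth_default 0 p i)"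
proof
  assume sub: "diagram q \<subseteq> diagram p"
  show "\<forall>i. nth_default 0 q i \<le> nth_default 0 p i"
  proof
    fix i
    show "nth_default 0 q i \<le> nth_default 0 p i"
    proof (cases "nth_default 0 q i")
      case (Suc j)
      then have "(i, j) \<in> diagram q" by (simp add: diagram_eq_nth_default)
      then have "(i, j) \<in> diagram p" using sub by blast
      then show ?thesis using Suc by (simp add: diagram_eq_nth_default)
    qed simp
  qed
qed (auto simp: diagram_eq_nth_default intro: less_le_trans)

lemma partition_nth_default_antimono:
  assumes "is_partition n p" "i \<le> j"
  shows "nth_default 0 p j \<le> nth_default 0 p i"
  using assms unfolding is_partition_def nth_default_def
  by (auto simp: sorted_wrt_iff_nth_less le_less)

lemma partition_nth_default_pos_iff:
  "is_partition n p \<Longrightarrow> 0 < nth_default 0 p i \<longleftrightarrow> i < length p"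
  by (auto simp: nth_default_def is_partition_def)

lemma partition_eqI:
  assumes "is_partition n p" "is_partition m q" "nth_default 0 p = nth_default 0 q"
  shows "p = q"
proof -
  have "length p = length q"
    using assms partition_nth_default_pos_iff by (metis linorder_neqE_nat less_irrefl)
  then show ?thesis
    using assms(3) by (metis nth_default_nth nth_equalityI)
qed

lemma partition_of_antitone:
  fixes f :: "nat \<Rightarrow> nat"
  assumes antitone: "\<And>i. f (Suc i) \<le> f i" and "f L = 0"
  shows "\<exists>q. is_partition (sum_list q) q \<and> nth_default 0 q = f"
proof -
  have le: "i \<le> j \<Longrightarrow> f j \<le> f i" for i j
    using lift_Suc_antimono_le[of f] antitone by blast
  define l where "l = (LEAST i. f i = 0)"
  have "f l = 0" using \<open>f L = 0\<close> unfolding l_def by (rule LeastI)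
  have pos: "i < l \<Longrightarrow> 0 < f i" for i
    using not_less_Least[of i "\<lambda>i. f i = 0"] by (simp add: l_def)
  define q where "q = map f [0..<l]"
  have "nth_default 0 q i = f i" for i
    using le[of l i] \<open>f l = 0\<close> by (auto simp: q_def nth_default_def)
  moreover have "sorted_wrt (\<ge>) q"
    by (auto simp: q_def sorted_wrt_iff_nth_less le)
  ultimately show ?thesis
    using pos by (intro exI[of _ q]) (auto simp: is_partition_def q_def)
qed

definition beta :: "nat list \<Rightarrow> nat \<Rightarrow> int" where
  "beta p k = int (nth_default 0 p k) - int k - 1"

definition maya :: "nat list \<Rightarrow> int set" where
  "maya p = range (beta p)"

lemma beta_strict_antimono:
  assumes "is_partition n p" "i < j"
  shows "beta p j < beta p i"
  using partition_nth_default_antimono[OF assms(1), of i j] assms(2) by (simp add: beta_def)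

lemma beta_less_iff: "is_partition n p \<Longrightarrow> beta p j < beta p i \<longleftrightarrow> i < j"
  using beta_strict_antimono by (metis less_asym linorder_neqE_nat)

lemma inj_beta: "is_partition n p \<Longrightarrow> inj (beta p)"
  by (rule injI) (metis beta_strict_antimono less_irrefl linorder_neqE_nat)

lemma beta_beyond_length: "length p \<le> k \<Longrightarrow> beta p k = - int k - 1"
  by (simp add: beta_def nth_default_beyond)

lemma beta_lower_bound: "- int k - 1 \<le> beta p k"
  by (simp add: beta_def)

lemma strict_antimono_range_unique:
  fixes f g :: "nat \<Rightarrow> 'a::linorder"
  assumes f: "\<And>i j. i < j \<Longrightarrow> f j < f i" and g: "\<And>i j. i < j \<Longrightarrow> g j < g i"
    and range: "range f = range g"
  shows "f = g"
proof
  fix k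
  show "f k = g k"
  proof (induction k rule: less_induct)
    case (less k)
    obtain j where j: "f k = g j" using range by (metis rangeI image_iff)
    obtain i where i: "g k = f i" using range by (metis rangeI image_iff)
    consider "j < k" | "j = k" | "k < j" by linarith
    then show ?case
    proof cases
      case 1
      then show ?thesis using less f[OF 1] j by simp
    next
      case 3
      then have "f k < f i" using g[OF 3] i j by simp
      then have "i < k" using f by (metis linorder_neqE_nat less_asym)
      then show ?thesis using less g[OF \<open>i < k\<close>] i by simp
    qed (use j in simp)
  qed
qed

lemma maya_inj:
  assumes "is_partition n p" "is_partition m q" "maya p = maya q"
  shows "p = q"
proof -
  have "beta p = beta q"
    using strict_antimono_range_unique beta_strict_antimono assms by (metis maya_def)
  then have "nth_default 0 p = nth_default 0 q" by (auto simp: beta_def fun_eq_iff)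
  then show ?thesis using partition_eqI assms(1,2) by blast
qed

lemma not_in_maya_between:
  assumes "is_partition n p" "beta p (Suc i) < v" "v < beta p i"
  shows "v \<notin> maya p"
  using assms beta_less_iff by (force simp: maya_def)

lemma maya_gap_between:
  assumes p: "is_partition n p" and "v \<notin> maya p" "v < beta p k"
  shows "\<exists>i\<ge>k. beta p (Suc i) < v \<and> v < beta p i"
proof -
  have "beta p (nat (- v) + length p) < v"
    using beta_beyond_length[of p "nat (- v) + length p"] by simp
  then have ex: "\<exists>i. beta p i < v" ..
  define l where "l = (LEAST i. beta p i < v)"
  have l: "beta p l < v" using LeastI_ex[OF ex] by (simp add: l_def)
  have "k < l" using l assms(3) beta_less_iff[OF p] by (metis less_trans)
  then obtain i where i: "l = Suc i" "k \<le> i" by (metis less_imp_Suc_add le_add1)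
  have "\<not> beta p i < v" using not_less_Least[of i "\<lambda>i. beta p i < v"] i by (simp add: l_def)
  moreover have "beta p i \<noteq> v" using assms(2) by (auto simp: maya_def)
  ultimately show ?thesis using i l by (intro exI[of _ i]) simp
qed

section \<open>Rim hooks\<close>

definition skew_shape :: "(nat \<Rightarrow> nat) \<Rightarrow> (nat \<Rightarrow> nat) \<Rightarrow> (nat \<times> nat) set" where
  "skew_shape P R = {(i, j). R i \<le> j \<and> j < P i}"

lemma diagram_diff_eq_skew_shape:
  "diagram p - diagram q = skew_shape (nth_default 0 p) (nth_default 0 q)"
  by (auto simp: diagram_eq_nth_default skew_shape_def)

text \<open>Consecutive rows of a border strip overlap in exactly one column.\<close>
definition is_border_strip :: "(nat \<Rightarrow> nat) \<Rightarrow> (nat \<Rightarrow> nat) \<Rightarrow> nat \<Rightarrow> nat \<Rightarrow> bool" where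
  "is_border_strip P R i0 i1 \<longleftrightarrow> i0 \<le> i1 \<and> (\<forall>i. R i < P i \<longleftrightarrow> i0 \<le> i \<and> i \<le> i1) \<and>
     (\<forall>i. i0 \<le> i \<and> i < i1 \<longrightarrow> R i + 1 = P (Suc i))"

definition adjacent_in :: "(nat \<times> nat) set \<Rightarrow> nat \<times> nat \<Rightarrow> nat \<times> nat \<Rightarrow> bool" where
  "adjacent_in S x y \<longleftrightarrow> x \<in> S \<and> y \<in> S \<and> adjacent_cells x y"

lemma cells_connected_iff: "cells_connected S \<longleftrightarrow> (\<forall>a\<in>S. \<forall>b\<in>S. (adjacent_in S)\<^sup>*\<^sup>* a b)"
  by (simp add: cells_connected_def adjacent_in_def[abs_def])

lemma rtranclp_crossing:
  assumes "r\<^sup>*\<^sup>* a b" "Q a" "\<not> Q b"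
  shows "\<exists>x y. r x y \<and> Q x \<and> \<not> Q y"
  using assms by (induction rule: rtranclp_induct) auto

lemma connected_skew_shape_rows_overlap:
  assumes conn: "cells_connected (skew_shape P R)"
    and "R i0 < P i0" "R i1 < P i1" "i0 \<le> i" "i < i1"
  shows "R i < P (Suc i)"
proof -
  let ?S = "skew_shape P R"
  have "(i0, R i0) \<in> ?S" "(i1, R i1) \<in> ?S"
    using assms(2,3) by (auto simp: skew_shape_def)
  then have "(adjacent_in ?S)\<^sup>*\<^sup>* (i0, R i0) (i1, R i1)"
    using conn by (simp add: cells_connected_iff)
  from rtranclp_crossing[OF this, of "\<lambda>c. fst c \<le> i"] assms(4,5)
  obtain x y where xy: "x \<in> ?S" "y \<in> ?S" "adjacent_cells x y" "fst x \<le> i" "i < fst y"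
    by (auto simp: adjacent_in_def)
  then have "y = (Suc (fst x), snd x)"
    by (cases x; cases y) (auto simp: adjacent_cells_def)
  moreover from this have "fst x = i" using xy(4,5) by simp
  ultimately show ?thesis using xy(1,2) by (cases x) (auto simp: skew_shape_def)
qed

lemma no_2x2_skew_shape_bound:
  assumes "\<not> contains_2x2 (skew_shape P R)" "R (Suc i) \<le> R i" "P (Suc i) \<le> P i"
  shows "P (Suc i) \<le> R i + 1"
proof (rule ccontr)
  assume "\<not> P (Suc i) \<le> R i + 1"
  then have "contains_2x2 (skew_shape P R)"
    using assms(2,3) unfolding contains_2x2_def skew_shape_def
    by (intro exI[of _ i] exI[of _ "P (Suc i) - 2"]) auto
  then show False using assms(1) by blast
qed

lemma border_strip_of_rim_hook:
  assumes P: "\<And>i. P (Suc i) \<le> P i" and R: "\<And>i. R (Suc i) \<le> R i"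
    and fin: "finite (skew_shape P R)" and ne: "skew_shape P R \<noteq> {}"
    and conn: "cells_connected (skew_shape P R)" and no_2x2: "\<not> contains_2x2 (skew_shape P R)"
  shows "\<exists>i0 i1. is_border_strip P R i0 i1"
proof -
  define rows where "rows = {i. R i < P i}"
  have "rows = fst ` skew_shape P R"
    by (force simp: rows_def skew_shape_def)
  then have "finite rows" "rows \<noteq> {}" using fin ne by auto
  define i0 i1 where "i0 = Min rows" and "i1 = Max rows"
  have "i0 \<in> rows" "i1 \<in> rows" "i0 \<le> i1"
    using \<open>finite rows\<close> \<open>rows \<noteq> {}\<close> by (auto simp: i0_def i1_def)
  have overlap: "R i < P (Suc i)" if "i0 \<le> i" "i < i1" for i
    using connected_skew_shape_rows_overlap[OF conn] \<open>i0 \<in> rows\<close> \<open>i1 \<in> rows\<close> that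
    by (simp add: rows_def)
  have "R i < P i \<longleftrightarrow> i0 \<le> i \<and> i \<le> i1" for i
  proof
    assume "R i < P i"
    then show "i0 \<le> i \<and> i \<le> i1"
      using \<open>finite rows\<close> by (auto simp: i0_def i1_def rows_def)
  next
    assume "i0 \<le> i \<and> i \<le> i1"
    then show "R i < P i"
      using overlap[of i] P[of i] \<open>i1 \<in> rows\<close> by (cases "i = i1") (auto simp: rows_def)
  qed
  moreover have "R i + 1 = P (Suc i)" if "i0 \<le> i" "i < i1" for i
    using overlap[OF that] no_2x2_skew_shape_bound[OF no_2x2 R[of i] P[of i]] by simp
  ultimately show ?thesis
    using \<open>i0 \<le> i1\<close> unfolding is_border_strip_def by blast
qed

lemma border_strip_path_to_last:
  assumes strip: "is_border_strip P R i0 i1" and R: "\<And>i. R (Suc i) \<le> R i"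
    and "(i, j) \<in> skew_shape P R"
  shows "(adjacent_in (skew_shape P R))\<^sup>*\<^sup>* (i, j) (i1, R i1)"
proof -
  let ?r = "adjacent_in (skew_shape P R)"
  have rows: "R i < P i \<longleftrightarrow> i0 \<le> i \<and> i \<le> i1"
    and overlap: "i0 \<le> i \<Longrightarrow> i < i1 \<Longrightarrow> R i + 1 = P (Suc i)" for i
    using strip by (auto simp: is_border_strip_def)
  have along_row: "?r\<^sup>*\<^sup>* (i, R i + d) (i, R i)" if "R i + d < P i" for i d
    using that
  proof (induction d)
    case (Suc d)
    then have "?r (i, R i + Suc d) (i, R i + d)"
      by (auto simp: adjacent_in_def skew_shape_def adjacent_cells_def)
    moreover have "?r\<^sup>*\<^sup>* (i, R i + d) (i, R i)"
      using Suc by simp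
    ultimately show ?case by (rule converse_rtranclp_into_rtranclp)
  qed simp
  have "?r\<^sup>*\<^sup>* (i, j) (i1, R i1)" if "i1 - i = d" "(i, j) \<in> skew_shape P R" for d i j
    using that
  proof (induction d arbitrary: i j)
    case 0
    then have "i = i1" using rows[of i] by (auto simp: skew_shape_def)
    then show ?case
      using along_row[of i1 "j - R i1"] 0 by (auto simp: skew_shape_def)
  next
    case (Suc d)
    have i: "i0 \<le> i" "i < i1" "R i \<le> j" "j < P i"
      using Suc.prems rows[of i] by (auto simp: skew_shape_def)
    have "?r\<^sup>*\<^sup>* (i, j) (i, R i)"
      using along_row[of i "j - R i"] i by simp
    moreover have "?r (i, R i) (Suc i, R i)"
      using i overlap[OF i(1,2)] R[of i] by (auto simp: adjacent_in_def skew_shape_def adjacent_cells_def)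
    moreover have "?r\<^sup>*\<^sup>* (Suc i, R i) (i1, R i1)"
      using Suc.IH[of "Suc i" "R i"] Suc.prems(1) overlap[OF i(1,2)] R[of i]
      by (simp add: skew_shape_def)
    ultimately show ?case by (meson converse_rtranclp_into_rtranclp rtranclp_trans)
  qed
  then show ?thesis using assms(3) by blast
qed

lemma border_strip_connected:
  assumes strip: "is_border_strip P R i0 i1" and R: "\<And>i. R (Suc i) \<le> R i"
  shows "cells_connected (skew_shape P R)"
proof -
  let ?r = "adjacent_in (skew_shape P R)"
  have "symp ?r" by (auto simp: symp_def adjacent_in_def adjacent_cells_def)
  then have sym: "symp ?r\<^sup>*\<^sup>*" by (rule symp_rtranclp)
  have "?r\<^sup>*\<^sup>* a b" if "a \<in> skew_shape P R" "b \<in> skew_shape P R" for a b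
  proof -
    have "?r\<^sup>*\<^sup>* a (i1, R i1)" "?r\<^sup>*\<^sup>* b (i1, R i1)"
      using border_strip_path_to_last[OF strip R] that by (metis prod.collapse)+
    then show ?thesis using sympD[OF sym] rtranclp_trans by metis
  qed
  then show ?thesis by (simp add: cells_connected_iff)
qed

lemma border_strip_no_2x2:
  assumes "is_border_strip P R i0 i1"
  shows "\<not> contains_2x2 (skew_shape P R)"
proof
  have rows: "R i < P i \<longleftrightarrow> i0 \<le> i \<and> i \<le> i1"
    and overlap: "i0 \<le> i \<Longrightarrow> i < i1 \<Longrightarrow> R i + 1 = P (Suc i)" for i
    using assms by (auto simp: is_border_strip_def)
  assume "contains_2x2 (skew_shape P R)"
  then obtain i j where "R i \<le> j" "j < P i" "R (Suc i) \<le> Suc j" "Suc j < P (Suc i)"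
    by (auto simp: contains_2x2_def skew_shape_def)
  moreover from this have "i0 \<le> i" "i < i1"
    using rows[of i] rows[of "Suc i"] by linarith+
  ultimately show False
    using overlap[of i] by linarith
qed

lemma card_border_strip:
  assumes "is_border_strip P R i0 i1"
  shows "int (card (skew_shape P R)) = (int (P i0) - int i0) - (int (R i1) - int i1)"
proof -
  have rows: "R i < P i \<longleftrightarrow> i0 \<le> i \<and> i \<le> i1"
    and overlap: "i0 \<le> i \<Longrightarrow> i < i1 \<Longrightarrow> R i + 1 = P (Suc i)" and "i0 \<le> i1" for i
    using assms by (auto simp: is_border_strip_def)
  have "skew_shape P R = (SIGMA i:{i0..i1}. {R i..<P i})"
    using rows by (force simp: skew_shape_def)
  then have "int (card (skew_shape P R)) = (\<Sum>i=i0..i1. int (P i) - int (R i))"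
    using rows by (simp add: of_nat_diff less_imp_le)
  also have "\<dots> = (int (P i0) - int i0) - (int (R i1) - int i1)"
  proof -
    have "m \<le> i1 \<longrightarrow> (\<Sum>i=i0..m. int (P i) - int (R i)) = (int (P i0) - int i0) - (int (R m) - int m)"
      if "i0 \<le> m" for m
      using that
    proof (induction m rule: dec_induct)
      case (step m)
      then show ?case using overlap[of m, symmetric] by (auto simp: sum.nat_ivl_Suc')
    qed simp
    then show ?thesis using \<open>i0 \<le> i1\<close> by simp
  qed
  finally show ?thesis .
qed

lemma rim_hook_imp_maya_gap:
  assumes p: "is_partition n p" and t: "0 < t" and hook: "has_rim_hook t p"
  shows "\<exists>x\<in>maya p. x - int t \<notin> maya p"
proof -
  obtain q m where q: "is_partition m q" and sub: "diagram q \<subseteq> diagram p"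
    and card: "card (diagram p - diagram q) = t"
    and conn: "cells_connected (diagram p - diagram q)"
    and no_2x2: "\<not> contains_2x2 (diagram p - diagram q)"
    using hook by (auto simp: has_rim_hook_def)
  define P R where "P = nth_default 0 p" and "R = nth_default 0 q"
  have shape: "diagram p - diagram q = skew_shape P R"
    by (simp add: P_def R_def diagram_diff_eq_skew_shape)
  have "finite (skew_shape P R)" "skew_shape P R \<noteq> {}"
    using card t shape by (metis card_gt_0_iff)+
  then obtain i0 i1 where strip: "is_border_strip P R i0 i1"
    using border_strip_of_rim_hook conn no_2x2 shape
      partition_nth_default_antimono[OF p, of _ "Suc _"] partition_nth_default_antimono[OF q, of _ "Suc _"]
    by (metis P_def R_def le_SucI order_refl)
  have "int t = beta p i0 - beta q i1"
    using card_border_strip[OF strip] card shape by (simp add: beta_def P_def R_def)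
  moreover have "beta p (Suc i1) < beta q i1" "beta q i1 < beta p i1"
  proof -
    have "\<not> R (Suc i1) < P (Suc i1)" "R i1 < P i1"
      using strip by (auto simp: is_border_strip_def)
    moreover have "P (Suc i1) \<le> P i1" "R (Suc i1) \<le> R i1"
      using partition_nth_default_antimono[OF p] partition_nth_default_antimono[OF q]
      by (simp_all add: P_def R_def)
    ultimately show "beta p (Suc i1) < beta q i1" "beta q i1 < beta p i1"
      by (simp_all add: beta_def P_def R_def)
  qed
  ultimately have "beta p i0 - int t \<notin> maya p"
    using not_in_maya_between[OF p] by simp
  then show ?thesis by (metis maya_def rangeI)
qed

lemma has_rim_hook_if_border_strip:
  assumes strip: "is_border_strip (nth_default 0 p) R i0 i1"
    and R: "\<And>i. R (Suc i) \<le> R i" "\<And>i. R i \<le> nth_default 0 p i" "R L = 0"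
  shows "has_rim_hook (card (skew_shape (nth_default 0 p) R)) p"
proof -
  obtain q where q: "is_partition (sum_list q) q" and q_R: "nth_default 0 q = R"
    using partition_of_antitone R(1,3) by blast
  have "diagram q \<subseteq> diagram p"
    using R(2) by (simp add: diagram_subset_iff q_R)
  moreover have "diagram p - diagram q = skew_shape (nth_default 0 p) R"
    by (simp add: diagram_diff_eq_skew_shape q_R)
  ultimately show ?thesis
    unfolding has_rim_hook_def
    using q border_strip_connected[OF strip R(1)] border_strip_no_2x2[OF strip] by metis
qed

lemma maya_gap_imp_rim_hook:
  assumes p: "is_partition n p" and t: "0 < t" and "x \<in> maya p" and gap: "x - int t \<notin> maya p"
  shows "has_rim_hook t p"
proof -
  define P where "P = nth_default 0 p"
  have P_antimono: "i \<le> j \<Longrightarrow> P j \<le> P i" for i j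
    using partition_nth_default_antimono[OF p] by (simp add: P_def)
  obtain k where k: "x = beta p k" using \<open>x \<in> maya p\<close> by (auto simp: maya_def)
  then obtain i1 where "k \<le> i1" and i1: "beta p (Suc i1) < x - int t" "x - int t < beta p i1"
    using maya_gap_between[OF p gap] t by force
  define j where "j = nat (x - int t + int i1 + 1)"
  have "int j = x - int t + int i1 + 1" "P (Suc i1) \<le> j" "j < P i1"
    using i1 beta_lower_bound[of i1 p] by (auto simp: j_def beta_def P_def)
  define R where "R i = (if k \<le> i \<and> i < i1 then P (Suc i) - 1 else if i = i1 then j else P i)" for i
  have strip: "is_border_strip P R k i1"
  proof -
    have pos: "0 < P (Suc i)" if "i < i1" for i
      using P_antimono[of "Suc i" i1] \<open>j < P i1\<close> that by simp
    have "R i < P i \<longleftrightarrow> k \<le> i \<and> i \<le> i1" for i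
      using pos[of i] P_antimono[of i "Suc i"] \<open>j < P i1\<close> \<open>k \<le> i1\<close> by (auto simp: R_def)
    moreover have "R i + 1 = P (Suc i)" if "k \<le> i" "i < i1" for i
      using that P_antimono[of "Suc i" i1] \<open>j < P i1\<close> by (simp add: R_def)
    ultimately show ?thesis
      using \<open>k \<le> i1\<close> by (simp add: is_border_strip_def)
  qed
  moreover have "R (Suc i) \<le> R i" "R i \<le> P i" for i
    using P_antimono[of i "Suc i"] P_antimono[of "Suc i" "Suc (Suc i)"] P_antimono[of "Suc i" i1]
      \<open>P (Suc i1) \<le> j\<close> \<open>j < P i1\<close> by (auto simp: R_def)
  moreover have "R (length p) = 0"
    using \<open>j < P i1\<close> partition_nth_default_pos_iff[OF p, of i1] by (simp add: R_def P_def nth_default_beyond)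
  moreover have "card (skew_shape P R) = t"
    using card_border_strip[OF strip] \<open>int j = _\<close> k by (simp add: R_def beta_def P_def)
  ultimately show ?thesis
    using has_rim_hook_if_border_strip by (metis P_def)
qed

theorem core_iff_maya_closed:
  assumes "is_partition n p" "0 < t"
  shows "is_core t p \<longleftrightarrow> (\<forall>x\<in>maya p. x - int t \<in> maya p)"
  using rim_hook_imp_maya_gap[OF assms] maya_gap_imp_rim_hook[OF assms]
  by (auto simp: is_core_def)

lemma in_maya_if_below_length:
  assumes "x < - int (length p)"
  shows "x \<in> maya p"
proof -
  have "beta p (nat (- x - 1)) = x"
    using assms beta_beyond_length[of p "nat (- x - 1)"] by simp
  then show ?thesis by (metis maya_def rangeI)
qed

lemma maya_window:
  assumes p: "is_partition n p" and "length p \<le> K"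
  shows "maya p \<inter> {- int K..} = beta p ` {..<K}"
proof -
  have "- int K \<le> beta p k \<longleftrightarrow> k < K" for k
    using beta_beyond_length[of p k] beta_lower_bound[of k p] assms(2)
    by (cases "length p \<le> k") auto
  then show ?thesis by (auto simp: maya_def)
qed

lemma sum_maya_window:
  assumes p: "is_partition n p" and "length p \<le> K"
  shows "(\<Sum>x\<in>maya p \<inter> {- int K..}. h x) = (\<Sum>k<K. h (beta p k))"
  using maya_window[OF assms] sum.reindex[of "beta p" "{..<K}" h] inj_beta[OF p]
  by (simp add: inj_on_subset)

lemma card_maya_window:
  assumes p: "is_partition n p" and "length p \<le> K"
  shows "card (maya p \<inter> {- int K..}) = K"
  using maya_window[OF assms] card_image[of "beta p" "{..<K}"] inj_beta[OF p]
  by (simp add: inj_on_subset)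

lemma maya_eq_window_Un:
  assumes p: "is_partition n p" and "length p \<le> K"
  shows "maya p = beta p ` {..<K} \<union> {..< - int K}"
proof -
  have "{..< - int K} \<subseteq> maya p"
    using in_maya_if_below_length assms(2) by force
  then show ?thesis
    using maya_window[OF assms] by (auto simp: not_le)
qed

lemma strictly_decreasing_nth_lower_bound:
  fixes ys :: "int list"
  assumes sorted: "sorted_wrt (>) ys" and low: "\<forall>y\<in>set ys. - int (length ys) \<le> y"
    and "k < length ys"
  shows "- int k - 1 \<le> ys ! k"
proof -
  let ?l = "length ys - 1"
  have "ys ! j + int (j - k) \<le> ys ! k" if "k \<le> j" "j < length ys" for j
    using that
  proof (induction j rule: dec_induct)
    case (step j)
    then have "ys ! Suc j < ys ! j" using sorted by (simp add: sorted_wrt_iff_nth_less)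
    then show ?case using step by (simp add: Suc_diff_le)
  qed simp
  from this[of ?l] have "ys ! ?l + int (?l - k) \<le> ys ! k"
    using assms(3) by simp
  moreover have "- int (length ys) \<le> ys ! ?l"
    using low assms(3) by simp
  ultimately show ?thesis using assms(3) by (simp add: of_nat_diff)
qed

lemma exists_partition_with_maya:
  fixes M :: "int set"
  assumes "finite (M \<inter> {- int K..})" "card (M \<inter> {- int K..}) = K"
    and below: "\<And>x. x < - int K \<Longrightarrow> x \<in> M"
  shows "\<exists>p. is_partition (sum_list p) p \<and> maya p = M"
proof -
  define ys where "ys = rev (sorted_list_of_set (M \<inter> {- int K..}))"
  have ys: "sorted_wrt (>) ys" "set ys = M \<inter> {- int K..}" "length ys = K"
    using assms(1,2) by (auto simp: ys_def sorted_wrt_rev strict_sorted_list_of_set)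
  then have lower: "k < K \<Longrightarrow> - int k - 1 \<le> ys ! k" for k
    using strictly_decreasing_nth_lower_bound[of ys k] by auto
  define f where "f k = (if k < K then nat (ys ! k + int k + 1) else 0)" for k
  have "f (Suc k) \<le> f k" for k
  proof (cases "Suc k < K")
    case True
    then have "ys ! Suc k < ys ! k" using ys by (auto simp: sorted_wrt_iff_nth_less)
    then show ?thesis using True by (simp add: f_def nat_le_eq_zle lower)
  qed (simp add: f_def)
  then obtain p where p: "is_partition (sum_list p) p" and p_f: "nth_default 0 p = f"
    using partition_of_antitone[of f K] by (auto simp: f_def)
  have "length p \<le> K"
    using partition_nth_default_pos_iff[OF p, of K] by (simp add: p_f f_def)
  have "beta p k = ys ! k" if "k < K" for k
    using lower[OF that] that by (simp add: beta_def p_f f_def)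
  then have "beta p ` {..<K} = (\<lambda>k. ys ! k) ` {..<K}"
    by (intro image_cong) auto
  also have "\<dots> = set ys"
    using ys(3) by (auto simp: set_conv_nth)
  finally have "maya p = M"
    using maya_eq_window_Un[OF p \<open>length p \<le> K\<close>] ys(2) below by auto
  with p show ?thesis by blast
qed

section \<open>The t-abacus\<close>

text \<open>The abacus with t runners: runner r < t carries the beads r + t k for all k < a r.\<close>
definition abacus :: "nat \<Rightarrow> (nat \<Rightarrow> int) \<Rightarrow> int set" where
  "abacus t a = {x. x div int t < a (nat (x mod int t))}"

definition core_vectors :: "nat \<Rightarrow> (nat \<Rightarrow> int) set" where
  "core_vectors t = {a. (\<forall>r\<ge>t. a r = 0) \<and> (\<Sum>r<t. a r) = 0}"

lemma runner_decomposition: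
  assumes "0 < t"
  obtains r k where "r < t" "x = int r + int t * k" "x div int t = k" "nat (x mod int t) = r"
proof
  show "nat (x mod int t) < t" "x = int (nat (x mod int t)) + int t * (x div int t)"
    using assms by (simp_all add: nat_less_iff)
qed simp_all

lemma abacus_mem:
  assumes "r < t"
  shows "int r + int t * k \<in> abacus t a \<longleftrightarrow> k < a r"
proof -
  have "(int r + int t * k) div int t = k" "(int r + int t * k) mod int t = int r"
    using assms by simp_all
  then show ?thesis by (simp add: abacus_def)
qed

lemma abacus_closed:
  assumes "0 < t" "x \<in> abacus t a"
  shows "x - int t \<in> abacus t a"
proof -
  obtain r k where r: "r < t" and x: "x = int r + int t * k"
    using runner_decomposition[OF assms(1)] by metis
  then have "k - 1 < a r"
    using assms(2) by (simp add: abacus_mem)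
  then have "int r + int t * (k - 1) \<in> abacus t a"
    using abacus_mem[OF r] by blast
  moreover have "x - int t = int r + int t * (k - 1)"
    using x by (simp add: algebra_simps)
  ultimately show ?thesis by simp
qed

lemma abacus_eqD:
  assumes "abacus t a = abacus t b" and "\<forall>r\<ge>t. a r = 0" "\<forall>r\<ge>t. b r = 0"
  shows "a = b"
proof
  fix r
  show "a r = b r"
  proof (cases "r < t")
    case True
    then have "k < a r \<longleftrightarrow> k < b r" for k
      using abacus_mem[OF True] assms(1) by metis
    then show ?thesis by (metis linorder_neqE less_irrefl)
  qed (use assms in simp)
qed

lemma maya_Nil: "maya [] = {..<0}"
proof (intro equalityI subsetI)
  fix x :: int
  assume "x \<in> {..<0}"
  then have "beta [] (nat (- x - 1)) = x" by (simp add: beta_def)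
  then show "x \<in> maya []" by (metis maya_def rangeI)
qed (auto simp: maya_def beta_def)

lemma abacus_zero: "0 < t \<Longrightarrow> abacus t (\<lambda>_. 0) = {..<0}"
  by (auto simp: abacus_def pos_imp_zdiv_neg_iff)

lemma int_down_closed_eq_lessThan:
  fixes S :: "int set"
  assumes down: "\<And>k. k \<in> S \<Longrightarrow> k - 1 \<in> S" and "lo \<in> S" and bounded: "\<And>k. k \<in> S \<Longrightarrow> k \<le> hi"
  shows "\<exists>a. S = {..<a}"
proof -
  have below: "j \<in> S" if "k \<in> S" "j \<le> k" for j k
    using that(2,1) by (induction j rule: int_le_induct) (auto intro: down)
  define m where "m = Max (S \<inter> {lo..hi})"
  have fin: "finite (S \<inter> {lo..hi})" and lo: "lo \<in> S \<inter> {lo..hi}"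
    using assms(2) bounded by auto
  moreover have "S \<inter> {lo..hi} \<noteq> {}" using lo by blast
  ultimately have "m \<in> S" "lo \<le> m"
    using Max_in[OF fin] Max_ge[OF fin lo] by (auto simp: m_def)
  have "k \<le> m" if "k \<in> S" for k
  proof (cases "lo \<le> k")
    case True
    then show ?thesis using Max_ge[OF fin] bounded that by (simp add: m_def)
  qed (use \<open>lo \<le> m\<close> in simp)
  then have "S = {..<m + 1}"
    using below[OF \<open>m \<in> S\<close>] by auto
  then show ?thesis ..
qed

text \<open>Closure under x \<mapsto> x - t makes every runner a downward closed set of levels.\<close>
lemma maya_closed_imp_abacus:
  assumes p: "is_partition n p" and t: "0 < t" and closed: "\<forall>x\<in>maya p. x - int t \<in> maya p"
  shows "\<exists>a. (\<forall>r\<ge>t. a r = 0) \<and> maya p = abacus t a"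
proof -
  have upper: "beta p k \<le> beta p 0" for k
    using beta_strict_antimono[OF p, of 0 k] by (cases k) auto
  have "\<exists>b. {k. int r + int t * k \<in> maya p} = {..<b}" for r
  proof (rule int_down_closed_eq_lessThan)
    fix k
    assume "k \<in> {k. int r + int t * k \<in> maya p}"
    then show "k - 1 \<in> {k. int r + int t * k \<in> maya p}"
      using closed by (auto simp: algebra_simps)
  next
    have "int t * (- int (length p) - int r - 1) \<le> 1 * (- int (length p) - int r - 1)"
      using t by (intro mult_right_mono_neg) simp_all
    then show "- int (length p) - int r - 1 \<in> {k. int r + int t * k \<in> maya p}"
      by (auto intro!: in_maya_if_below_length)
  next
    fix k
    assume "k \<in> {k. int r + int t * k \<in> maya p}"
    then have "int r + int t * k \<le> beta p 0" using upper by (auto simp: maya_def)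
    moreover have "k \<le> int t * k" if "0 \<le> k" using t that by (simp add: mult_le_cancel_right1)
    ultimately show "k \<le> beta p 0"
      using beta_lower_bound[of 0 p] by (cases "0 \<le> k") linarith+
  qed
  then obtain b where b: "\<And>r k. int r + int t * k \<in> maya p \<longleftrightarrow> k < b r"
    by (metis lessThan_iff mem_Collect_eq)
  define a where "a r = (if r < t then b r else 0)" for r
  have "x \<in> maya p \<longleftrightarrow> x \<in> abacus t a" for x
    using t by (elim runner_decomposition[of t x]) (simp add: b abacus_mem a_def)
  then have "maya p = abacus t a" by blast
  then show ?thesis by (intro exI[of _ a]) (simp add: a_def)
qed

lemma abacus_window:
  assumes t: "0 < t" and low: "\<forall>r<t. - int J \<le> a r"
  shows "abacus t a \<inter> {- int (t * J)..} = (\<lambda>(r, k). int r + int t * k) ` (SIGMA r:{..<t}. {- int J..<a r})"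
    and "inj_on (\<lambda>(r, k). int r + int t * k) (SIGMA r:{..<t}. {- int J..<a r})"
proof -
  show "abacus t a \<inter> {- int (t * J)..} = (\<lambda>(r, k). int r + int t * k) ` (SIGMA r:{..<t}. {- int J..<a r})"
  proof (intro set_eqI iffI)
    fix x
    assume x: "x \<in> abacus t a \<inter> {- int (t * J)..}"
    obtain r k where "r < t" and rk: "x = int r + int t * k"
      using runner_decomposition[OF t] by metis
    moreover have "- int J \<le> k"
    proof (rule ccontr)
      assume "\<not> - int J \<le> k"
      then have "int t * k \<le> int t * (- int J - 1)" using t by simp
      then show False using x rk \<open>r < t\<close> by (simp add: algebra_simps)
    qed
    ultimately show "x \<in> (\<lambda>(r, k). int r + int t * k) ` (SIGMA r:{..<t}. {- int J..<a r})"
      using x abacus_mem by (auto intro!: rev_image_eqI[of "(r, k)"])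
  next
    fix x
    assume "x \<in> (\<lambda>(r, k). int r + int t * k) ` (SIGMA r:{..<t}. {- int J..<a r})"
    then obtain r k where "r < t" "- int J \<le> k" "k < a r" "x = int r + int t * k"
      by auto
    moreover from this have "int t * (- int J) \<le> int t * k" by (intro mult_left_mono) simp_all
    ultimately show "x \<in> abacus t a \<inter> {- int (t * J)..}"
      by (simp add: abacus_mem)
  qed
  show "inj_on (\<lambda>(r, k). int r + int t * k) (SIGMA r:{..<t}. {- int J..<a r})"
  proof (rule inj_onI, clarsimp)
    fix r k r' k'
    assume "r < t" "r' < t" and eq: "int r + int t * k = int r' + int t * k'"
    have "(int r + int t * k) mod int t = int r" "(int r' + int t * k') mod int t = int r'"
      using \<open>r < t\<close> \<open>r' < t\<close> by simp_all
    then have "int r = int r'" using eq by metis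
    then show "r = r' \<and> k = k'" using eq t by simp
  qed
qed

lemma sum_abacus_window:
  assumes "0 < t" "\<forall>r<t. - int J \<le> a r"
  shows "(\<Sum>x\<in>abacus t a \<inter> {- int (t * J)..}. h x) = (\<Sum>r<t. \<Sum>k\<in>{- int J..<a r}. h (int r + int t * k))"
proof -
  have "(\<Sum>x\<in>abacus t a \<inter> {- int (t * J)..}. h x) =
      (\<Sum>(r, k)\<in>(SIGMA r:{..<t}. {- int J..<a r}). h (int r + int t * k))"
    unfolding abacus_window(1)[OF assms] sum.reindex[OF abacus_window(2)[OF assms]]
    by (simp add: case_prod_beta)
  also have "\<dots> = (\<Sum>r<t. \<Sum>k\<in>{- int J..<a r}. h (int r + int t * k))"
    by (rule sum.Sigma[symmetric]) auto
  finally show ?thesis .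
qed

lemma card_abacus_window:
  assumes "0 < t" "\<forall>r<t. - int J \<le> a r"
  shows "int (card (abacus t a \<inter> {- int (t * J)..})) = (\<Sum>r<t. a r + int J)"
proof -
  have "card (abacus t a \<inter> {- int (t * J)..}) = card (SIGMA r:{..<t}. {- int J..<a r})"
    unfolding abacus_window(1)[OF assms] by (rule card_image[OF abacus_window(2)[OF assms]])
  also have "\<dots> = (\<Sum>r<t. card {- int J..<a r})"
    by (rule card_SigmaI) auto
  finally have "int (card (abacus t a \<inter> {- int (t * J)..})) = (\<Sum>r<t. int (card {- int J..<a r}))"
    by simp
  also have "\<dots> = (\<Sum>r<t. a r + int J)"
    using assms(2) by (intro sum.cong) auto
  finally show ?thesis .
qed

section \<open>srank modulo 4\<close>

lemma num_odd_conjugate_eq_card: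
  assumes "foldr max p 0 \<le> B"
  shows "num_odd (conjugate p) = card {j. j < B \<and> odd (length (filter (\<lambda>x. j < x) p))}"
proof -
  have max: "x \<le> foldr max p 0" if "x \<in> set p" for x
    using that by (induction p) auto
  have "num_odd (conjugate p) = card {j. j < foldr max p 0 \<and> odd (length (filter (\<lambda>x. j < x) p))}"
    by (simp add: num_odd_def conjugate_def length_filter_conv_card cong: conj_cong)
  also have "\<dots> = card {j. j < B \<and> odd (length (filter (\<lambda>x. j < x) p))}"
  proof (rule arg_cong[where f = card], rule Collect_cong)
    fix j
    have "filter (\<lambda>x. j < x) p = []" if "foldr max p 0 \<le> j"
      using that max by (fastforce simp: filter_empty_conv)
    then show "(j < foldr max p 0 \<and> odd (length (filter (\<lambda>x. j < x) p))) \<longleftrightarrow>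
        (j < B \<and> odd (length (filter (\<lambda>x. j < x) p)))"
      using assms by (cases "foldr max p 0 \<le> j") auto
  qed
  finally show ?thesis .
qed

lemma num_odd_conjugate:
  assumes "sorted_wrt (\<ge>) p"
  shows "int (num_odd (conjugate p)) = (\<Sum>k<length p. (-1) ^ k * int (p ! k))"
  using assms
proof (induction p)
  case Nil
  then show ?case by (simp add: num_odd_def conjugate_def)
next
  case (Cons x p)
  let ?odd_cols = "\<lambda>q. {j. j < x \<and> odd (length (filter (\<lambda>y. j < y) q))}"
  have max: "foldr max p 0 \<le> x" "foldr max (x # p) 0 \<le> x"
    using Cons.prems by (induction p) auto
  have "?odd_cols (x # p) = {..<x} - ?odd_cols p"
    by auto
  then have "card (?odd_cols (x # p)) = x - card (?odd_cols p)"
    by (simp add: card_Diff_subset subset_eq)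
  moreover have "card (?odd_cols p) \<le> x"
    using card_mono[of "{..<x}" "?odd_cols p"] by auto
  ultimately have "int (num_odd (conjugate (x # p))) = int x - int (num_odd (conjugate p))"
    using num_odd_conjugate_eq_card[OF max(1)] num_odd_conjugate_eq_card[OF max(2)]
    by (simp add: of_nat_diff)
  also have "\<dots> = int x - (\<Sum>k<length p. (-1) ^ k * int (p ! k))"
    using Cons by simp
  also have "\<dots> = (\<Sum>k<length (x # p). (-1) ^ k * int ((x # p) ! k))"
    by (simp only: length_Cons sum.lessThan_Suc_shift) (simp add: sum_negf)
  finally show ?case .
qed

definition signed_odd_count :: "nat list \<Rightarrow> int" where
  "signed_odd_count p = (\<Sum>k<length p. if odd (p ! k) then (-1) ^ k else 0)"

lemma srank_term_cong_mod4:
  fixes m k :: nat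
  shows "4 dvd (of_bool (odd m) - (-1) ^ k * int m) - (int m - (if odd m then (-1) ^ k else 0))"
proof (cases "even k")
  case True
  then show ?thesis
    by (cases "even m") (auto elim!: evenE oddE simp: algebra_simps)
qed simp

lemma srank_mod4:
  assumes "is_partition n p"
  shows "srank p mod 4 = (int n - signed_odd_count p) mod 4"
proof -
  have "int n = (\<Sum>k<length p. int (p ! k))" and "sorted_wrt (\<ge>) p"
    using assms by (auto simp: is_partition_def sum_list_sum_nth atLeast0LessThan)
  moreover have "int (num_odd p) = (\<Sum>k<length p. of_bool (odd (p ! k)))"
    by (simp add: num_odd_def length_filter_conv_card Int_def lessThan_def)
  ultimately have "srank p - (int n - signed_odd_count p) =
      (\<Sum>k<length p. (of_bool (odd (p ! k)) - (-1) ^ k * int (p ! k))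
         - (int (p ! k) - (if odd (p ! k) then (-1) ^ k else 0)))"
    by (simp add: srank_def num_odd_conjugate signed_odd_count_def sum_subtractf)
  also have "4 dvd \<dots>"
    by (intro dvd_sum srank_term_cong_mod4)
  finally show ?thesis by (simp add: mod_eq_dvd_iff)
qed

lemma signed_odd_count_eq_sum_beta:
  assumes "length p \<le> K"
  shows "signed_odd_count p = (\<Sum>k<K. of_bool (even (beta p k)) - of_bool (even (beta [] k)))"
proof -
  have "signed_odd_count p = (\<Sum>k<K. if k < length p \<and> odd (p ! k) then (-1) ^ k else 0)"
    unfolding signed_odd_count_def using assms by (intro sum.mono_neutral_cong_left) auto
  also have "\<dots> = (\<Sum>k<K. of_bool (even (beta p k)) - of_bool (even (beta [] k)))"
    by (intro sum.cong) (auto simp: beta_def nth_default_def even_add)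
  finally show ?thesis .
qed

section \<open>Counting t-cores by abacus vectors\<close>

definition double_size :: "nat \<Rightarrow> (nat \<Rightarrow> int) \<Rightarrow> int" where
  "double_size t a = (\<Sum>r<t. 2 * int r * a r + int t * a r * (a r - 1))"

text \<open>For odd t, (a + [r even]) div 2 is the signed number of even positions among the beads that
  runner r carries beyond those of the empty abacus.\<close>
definition even_bead_balance :: "nat \<Rightarrow> (nat \<Rightarrow> int) \<Rightarrow> int" where
  "even_bead_balance t a = (\<Sum>r<t. (a r + of_bool (even r)) div 2)"

lemma sum_int_telescope:
  fixes C :: "int \<Rightarrow> 'a::ab_group_add"
  assumes "\<And>k. C (k + 1) - C k = f k" and "lo \<le> hi"
  shows "(\<Sum>k\<in>{lo..<hi}. f k) = C hi - C lo"
  using assms(2)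
proof (induction hi rule: int_ge_induct)
  case (step i)
  have "{lo..<i + 1} = insert i {lo..<i}" using step by auto
  then show ?case using step assms(1)[of i] by (simp add: algebra_simps)
qed simp

lemma exists_window:
  assumes "0 < t"
  shows "\<exists>J. L \<le> t * J \<and> (\<forall>r<t. - int J \<le> a r)"
proof (intro exI conjI allI impI)
  define J where "J = L + (\<Sum>r<t. nat (- a r))"
  have "L \<le> J" "J \<le> t * J"
    using assms by (simp add: J_def, cases t, simp_all)
  then show "L \<le> t * J" by linarith
  fix r
  assume "r < t"
  then have "nat (- a r) \<le> (\<Sum>r<t. nat (- a r))"
    by (intro member_le_sum) auto
  then have "int (nat (- a r)) \<le> int J"
    unfolding J_def by linarith
  then show "- int J \<le> a r" by linarith
qed

text \<open>Both sides telescope runner by runner, against the empty partition, whose Maya diagram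
  is the abacus of the zero vector.\<close>
lemma sum_beta_telescope:
  fixes h :: "int \<Rightarrow> int" and C :: "nat \<Rightarrow> int \<Rightarrow> int"
  assumes p: "is_partition n p" and t: "0 < t" and maya: "maya p = abacus t a"
    and step: "\<And>r k. C r (k + 1) - C r k = h (int r + int t * k)"
    and J: "length p \<le> t * J" "\<forall>r<t. - int J \<le> a r"
  shows "(\<Sum>k<t * J. h (beta p k) - h (beta [] k)) = (\<Sum>r<t. C r (a r) - C r 0)"
proof -
  have runners: "(\<Sum>k<t * J. h (beta q k)) = (\<Sum>r<t. C r (b r) - C r (- int J))"
    if "is_partition m q" "length q \<le> t * J" "maya q = abacus t b" "\<forall>r<t. - int J \<le> b r" for m q b
  proof -
    have "(\<Sum>k<t * J. h (beta q k)) = (\<Sum>r<t. \<Sum>k\<in>{- int J..<b r}. h (int r + int t * k))"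
      using sum_maya_window[OF that(1,2), of h, symmetric] sum_abacus_window[OF t that(4), of h] that(3)
      by simp
    also have "\<dots> = (\<Sum>r<t. C r (b r) - C r (- int J))"
    proof (rule sum.cong[OF refl])
      fix r
      assume "r \<in> {..<t}"
      then show "(\<Sum>k\<in>{- int J..<b r}. h (int r + int t * k)) = C r (b r) - C r (- int J)"
        using that(4) by (intro sum_int_telescope[where C = "C r"] step) simp
    qed
    finally show ?thesis .
  qed
  have "is_partition 0 []" by (simp add: is_partition_def)
  then have "(\<Sum>k<t * J. h (beta [] k)) = (\<Sum>r<t. C r 0 - C r (- int J))"
    using runners[of 0 "[]" "\<lambda>_. 0"] maya_Nil abacus_zero[OF t] by simp
  moreover have "(\<Sum>k<t * J. h (beta p k)) = (\<Sum>r<t. C r (a r) - C r (- int J))"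
    using runners[OF p J(1) maya J(2)] .
  ultimately show ?thesis
    by (simp add: sum_subtractf)
qed

lemma core_vector_of_maya:
  assumes p: "is_partition n p" and t: "0 < t"
    and maya: "maya p = abacus t a" and a: "\<forall>r\<ge>t. a r = 0"
  shows "a \<in> core_vectors t"
proof -
  obtain J where J: "length p \<le> t * J" "\<forall>r<t. - int J \<le> a r"
    using exists_window[OF t] by blast
  have "int (t * J) = int (card (abacus t a \<inter> {- int (t * J)..}))"
    using card_maya_window[OF p J(1)] maya by simp
  also have "\<dots> = (\<Sum>r<t. a r) + int (t * J)"
    using card_abacus_window[OF t J(2)] by (simp add: sum.distrib)
  finally show ?thesis
    using a by (simp add: core_vectors_def)
qed

lemma double_size_of_maya:
  assumes p: "is_partition n p" and t: "0 < t" and maya: "maya p = abacus t a"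
  shows "2 * int n = double_size t a"
proof -
  obtain J where J: "length p \<le> t * J" "\<forall>r<t. - int J \<le> a r"
    using exists_window[OF t] by blast
  have "int n = (\<Sum>k<t * J. int (nth_default 0 p k))"
    using p J(1) by (auto simp: is_partition_def sum_list_sum_nth nth_default_def atLeast0LessThan
        split: if_splits intro!: sum.mono_neutral_cong_left)
  also have "\<dots> = (\<Sum>k<t * J. beta p k - beta [] k)"
    by (simp add: beta_def)
  finally have "2 * int n = (\<Sum>k<t * J. 2 * beta p k - 2 * beta [] k)"
    by (simp add: sum_distrib_left algebra_simps)
  also have "\<dots> = (\<Sum>r<t. 2 * int r * a r + int t * a r * (a r - 1))"
    using sum_beta_telescope[OF p t maya _ J, where h = "\<lambda>x. 2 * x"
          and C = "\<lambda>r a. 2 * int r * a + int t * a * (a - 1)"]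
    by (simp add: algebra_simps)
  finally show ?thesis
    by (simp add: double_size_def)
qed

lemma signed_odd_count_of_maya:
  assumes p: "is_partition n p" and maya: "maya p = abacus t a" and "odd t"
  shows "signed_odd_count p = even_bead_balance t a"
proof -
  have t: "0 < t" using \<open>odd t\<close> by (simp add: odd_pos)
  obtain J where J: "length p \<le> t * J" "\<forall>r<t. - int J \<le> a r"
    using exists_window[OF t] by blast
  have "signed_odd_count p = (\<Sum>k<t * J. of_bool (even (beta p k)) - of_bool (even (beta [] k)))"
    using signed_odd_count_eq_sum_beta[OF J(1)] .
  also have "\<dots> = (\<Sum>r<t. (a r + of_bool (even r)) div 2 - (0 + of_bool (even r)) div 2)"
  proof (rule sum_beta_telescope[OF p t maya _ J, where h = "\<lambda>x. of_bool (even x)"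
        and C = "\<lambda>r a. (a + of_bool (even r)) div 2"])
    fix r k
    show "(k + 1 + of_bool (even r)) div 2 - (k + of_bool (even r)) div 2 = of_bool (even (int r + int t * k))"
      using \<open>odd t\<close> by (cases "even r"; cases "even k") (auto elim!: evenE oddE simp: even_add)
  qed
  finally show ?thesis
    by (simp add: even_bead_balance_def)
qed

lemma exists_partition_of_core_vector:
  assumes t: "0 < t" and a: "a \<in> core_vectors t"
  shows "\<exists>p. is_partition (sum_list p) p \<and> maya p = abacus t a"
proof -
  obtain J where J: "\<forall>r<t. - int J \<le> a r"
    using exists_window[OF t, of 0 a] by blast
  show ?thesis
  proof (rule exists_partition_with_maya)
    show "finite (abacus t a \<inter> {- int (t * J)..})"
      unfolding abacus_window(1)[OF t J] by (intro finite_imageI finite_SigmaI) auto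
    have "int (card (abacus t a \<inter> {- int (t * J)..})) = (\<Sum>r<t. a r) + int (t * J)"
      using card_abacus_window[OF t J] by (simp add: sum.distrib)
    also have "\<dots> = int (t * J)"
      using a by (simp add: core_vectors_def)
    finally show "card (abacus t a \<inter> {- int (t * J)..}) = t * J"
      by (simp only: of_nat_eq_iff)
  next
    fix x
    assume x: "x < - int (t * J)"
    obtain r k where r: "r < t" and "x = int r + int t * k"
      using runner_decomposition[OF t] by metis
    with x have "int t * k < int t * (- int J)" by simp
    then have "k < a r"
      using J r t by (smt (verit) mult_less_cancel_left_pos of_nat_0_less_iff)
    then show "x \<in> abacus t a"
      using abacus_mem[OF r] \<open>x = _\<close> by simp
  qed
qed

definition abacus_partition :: "nat \<Rightarrow> (nat \<Rightarrow> int) \<Rightarrow> nat list" where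
  "abacus_partition t a = (SOME p. is_partition (sum_list p) p \<and> maya p = abacus t a)"

lemma abacus_partition_maya:
  assumes "0 < t" "a \<in> core_vectors t"
  shows "is_partition (sum_list (abacus_partition t a)) (abacus_partition t a)"
    and "maya (abacus_partition t a) = abacus t a"
  using someI_ex[OF exists_partition_of_core_vector[OF assms]]
  by (simp_all add: abacus_partition_def)

lemma bij_betw_core_vectors_cores:
  assumes t: "0 < t"
  shows "bij_betw (abacus_partition t) {a \<in> core_vectors t. double_size t a = 2 * int n}
    {p \<in> partitions n. is_core t p}"
proof (rule bij_betw_imageI)
  let ?A = "{a \<in> core_vectors t. double_size t a = 2 * int n}"
  show "inj_on (abacus_partition t) ?A"
  proof (rule inj_onI)
    fix a b
    assume a: "a \<in> ?A" and b: "b \<in> ?A" and "abacus_partition t a = abacus_partition t b"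
    then have "abacus t a = abacus t b"
      using abacus_partition_maya(2)[OF t] by (metis (no_types, lifting) mem_Collect_eq)
    then show "a = b"
      using a b by (intro abacus_eqD) (auto simp: core_vectors_def)
  qed
  show "abacus_partition t ` ?A = {p \<in> partitions n. is_core t p}"
  proof (intro set_eqI iffI)
    fix p
    assume "p \<in> abacus_partition t ` ?A"
    then obtain a where a: "a \<in> ?A" and p: "p = abacus_partition t a" by blast
    then have "is_partition (sum_list p) p" and maya: "maya p = abacus t a"
      using abacus_partition_maya[OF t] by auto
    moreover have "\<forall>r\<ge>t. a r = 0" using a by (simp add: core_vectors_def)
    ultimately have "is_partition n p"
      using double_size_of_maya[OF _ t maya] a by auto
    moreover have "is_core t p"
      using core_iff_maya_closed[OF \<open>is_partition n p\<close> t] maya abacus_closed[OF t] by simp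
    ultimately show "p \<in> {p \<in> partitions n. is_core t p}" by (simp add: partitions_def)
  next
    fix p
    assume "p \<in> {p \<in> partitions n. is_core t p}"
    then have p: "is_partition n p" and "is_core t p"
      by (auto simp: partitions_def)
    then obtain a where a: "\<forall>r\<ge>t. a r = 0" and maya: "maya p = abacus t a"
      using maya_closed_imp_abacus[OF p t] core_iff_maya_closed[OF p t] by blast
    note vector = core_vector_of_maya[OF p t maya a] double_size_of_maya[OF p t maya]
    have "abacus_partition t a = p"
      using abacus_partition_maya[OF t vector(1)] maya maya_inj[OF _ p] by metis
    then show "p \<in> abacus_partition t ` ?A"
      using vector by force
  qed
qed

theorem card_cores_eq_card_core_vectors:
  fixes \<Phi> :: "int \<Rightarrow> bool"
  assumes "odd t"
  shows "card {p \<in> partitions n. is_core t p \<and> \<Phi> (signed_odd_count p)} =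
    card {a \<in> core_vectors t. double_size t a = 2 * int n \<and> \<Phi> (even_bead_balance t a)}"
proof -
  have t: "0 < t" using assms by (simp add: odd_pos)
  let ?f = "abacus_partition t" and ?A = "{a \<in> core_vectors t. double_size t a = 2 * int n}"
  have bij: "bij_betw ?f ?A {p \<in> partitions n. is_core t p}"
    by (rule bij_betw_core_vectors_cores[OF t])
  have "signed_odd_count (?f a) = even_bead_balance t a" if "a \<in> core_vectors t" for a
    using signed_odd_count_of_maya[OF abacus_partition_maya[OF t that] assms] by simp
  then have "{a \<in> core_vectors t. double_size t a = 2 * int n \<and> \<Phi> (even_bead_balance t a)}
      = {a \<in> ?A. \<Phi> (signed_odd_count (?f a))}"
    by auto
  moreover have "{p \<in> partitions n. is_core t p \<and> \<Phi> (signed_odd_count p)}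
      = {p \<in> ?f ` ?A. \<Phi> (signed_odd_count p)}"
    using bij_betw_imp_surj_on[OF bij] by simp
  moreover have "{p \<in> ?f ` ?A. \<Phi> (signed_odd_count p)} = ?f ` {a \<in> ?A. \<Phi> (signed_odd_count (?f a))}"
    by auto
  moreover have "inj_on ?f {a \<in> ?A. \<Phi> (signed_odd_count (?f a))}"
    using bij_betw_imp_inj_on[OF bij] by (rule inj_on_subset) blast
  ultimately show ?thesis
    by (simp add: card_image)
qed

section \<open>5-cores modulo 4\<close>

lemma a5_eq_card_core_vectors: "a5 n = card {a \<in> core_vectors 5. double_size 5 a = 2 * int n}"
  using card_cores_eq_card_core_vectors[of 5 n "\<lambda>_. True"] by (simp add: a5_def)

lemma a50_eq_card_core_vectors:
  "a50 n = card {a \<in> core_vectors 5. double_size 5 a = 2 * int n \<and> (int n - even_bead_balance 5 a) mod 4 = 0}"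
proof -
  have "{p \<in> partitions n. is_core 5 p \<and> srank p mod 4 = 0} =
        {p \<in> partitions n. is_core 5 p \<and> (int n - signed_odd_count p) mod 4 = 0}"
  proof (intro Collect_cong conj_cong refl)
    fix p
    assume "p \<in> partitions n"
    then have "srank p mod 4 = (int n - signed_odd_count p) mod 4"
      using srank_mod4 by (simp add: partitions_def)
    then show "srank p mod 4 = 0 \<longleftrightarrow> (int n - signed_odd_count p) mod 4 = 0"
      by (simp only:)
  qed
  then show ?thesis
    using card_cores_eq_card_core_vectors[of 5 n "\<lambda>s. (int n - s) mod 4 = 0"] by (simp add: a50_def)
qed

lemma sum_lessThan_5:
  fixes f :: "nat \<Rightarrow> 'a::comm_monoid_add"
  shows "(\<Sum>r<5. f r) = f 0 + f 1 + f 2 + f 3 + f 4"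
  by (simp add: numeral_eq_Suc add.assoc)

lemma runner_size_mod8:
  fixes y e :: int
  assumes "e = 0 \<or> e = 1"
  shows "8 dvd (2 * int r * (2 * y + e) + 5 * (2 * y + e) * (2 * y + e - 1))
    - (4 * y * (int r + e) + 2 * int r * e + 2 * y)"
proof -
  obtain z where "y = 2 * z \<or> y = 2 * z + 1"
    by (metis evenE oddE)
  then have "(2 * int r * (2 * y + e) + 5 * (2 * y + e) * (2 * y + e - 1))
      - (4 * y * (int r + e) + 2 * int r * e + 2 * y) \<in>
      {8 * (10 * z * z - 3 * z), 8 * (10 * z * z + 7 * z + 1), 8 * (10 * z * z + z), 8 * (10 * z * z + 11 * z + 3)}"
    using assms by (elim disjE) (simp_all add: algebra_simps)
  then show ?thesis by auto
qed

lemma double_size5_mod8: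
  "8 dvd double_size 5 a
    - (\<Sum>r<5. 4 * (a r div 2) * (int r + a r mod 2) + 2 * int r * (a r mod 2) + 2 * (a r div 2))"
proof -
  have "8 dvd (2 * int r * a r + 5 * a r * (a r - 1))
      - (4 * (a r div 2) * (int r + a r mod 2) + 2 * int r * (a r mod 2) + 2 * (a r div 2))" for r
  proof -
    have "a r mod 2 = 0 \<or> a r mod 2 = 1" by auto
    then show ?thesis using runner_size_mod8[of "a r mod 2" r "a r div 2"] by simp
  qed
  then show ?thesis
    unfolding double_size_def sum_subtractf[symmetric] of_nat_numeral by (rule dvd_sum)
qed

lemma even_bead_balance5:
  "even_bead_balance 5 a = (\<Sum>r<5. a r div 2) + a 0 mod 2 + a 2 mod 2 + a 4 mod 2"
proof -
  have "(a r + of_bool (even r)) div 2 = a r div 2 + (if even r then a r mod 2 else 0)" for r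
    by (cases "even (a r)") (auto elim!: evenE oddE)
  then show ?thesis by (simp add: even_bead_balance_def sum_lessThan_5)
qed

lemma srank_residue_table:
  fixes e0 e1 e2 e3 e4 y N S :: int
  assumes "e0 = 0 \<or> e0 = 1" "e1 = 0 \<or> e1 = 1" "e2 = 0 \<or> e2 = 1" "e3 = 0 \<or> e3 = 1"
    "e4 = 0 \<or> e4 = 1" "y = 0 \<or> y = 1"
    and "even (e0 + e1 + e2 + e3 + e4)"
    and "e0 = 0 \<and> e1 = 1 \<and> e2 = 0 \<and> e3 = 1 \<and> e4 = 0 \<longrightarrow> y = 0"
    and "N mod 4 = (2 * y + e1 + 2 * e2 + 3 * e3 + 4 * e4 - (e0 + e1 + e2 + e3 + e4) div 2) mod 4"
    and "(N - S) mod 4 = (2 * y + e1 + 2 * e2 + 3 * e3 + 4 * e4 - e0 - e2 - e4) mod 4"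
  shows "(N mod 4 \<in> {0, 1} \<longrightarrow> (N - S) mod 4 = 0) \<and> (N mod 4 = 2 \<longrightarrow> (N - S) mod 4 \<noteq> 0) \<and>
    (N mod 4 = 3 \<longrightarrow> ((N - S) mod 4 = 0 \<longleftrightarrow> e0 = 0 \<and> e1 = 1 \<and> e2 = 0 \<and> e3 = 1 \<and> e4 = 0))"
  using assms by (elim disjE; simp)

definition lift_parity :: "(nat \<Rightarrow> int) \<Rightarrow> bool" where
  "lift_parity a \<longleftrightarrow> even (a 0) \<and> odd (a 1) \<and> even (a 2) \<and> odd (a 3) \<and> even (a 4)"

lemma core_vector5_mod4:
  assumes a: "a \<in> core_vectors 5" and N: "double_size 5 a = 2 * N"
  defines "S \<equiv> even_bead_balance 5 a"
  shows "N mod 4 \<in> {0, 1} \<Longrightarrow> (N - S) mod 4 = 0"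
    and "N mod 4 = 2 \<Longrightarrow> (N - S) mod 4 \<noteq> 0"
    and "N mod 4 = 3 \<Longrightarrow> (N - S) mod 4 = 0 \<longleftrightarrow> lift_parity a"
proof -
  define e y where "e r = a r mod 2" and "y r = a r div 2" for r
  have ar: "a r = 2 * y r + e r" and e: "e r = 0 \<or> e r = 1" for r
    by (auto simp: e_def y_def)
  define Y where "Y = (\<Sum>r<5. y r * (int r + e r))"
  have "(\<Sum>r<5. 2 * y r + e r) = 0"
    using a ar by (simp add: core_vectors_def)
  then have s: "(\<Sum>r<5. y r) = - ((e 0 + e 1 + e 2 + e 3 + e 4) div 2)"
    and even_E: "even (e 0 + e 1 + e 2 + e 3 + e 4)"
    by (simp_all add: sum_lessThan_5) presburger+
  have "8 dvd double_size 5 a - (4 * Y + 2 * (\<Sum>r<5. int r * e r) + 2 * (\<Sum>r<5. y r))"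
    using double_size5_mod8[of a]
    by (simp add: Y_def e_def y_def sum.distrib sum_distrib_left algebra_simps)
  then obtain k where "2 * N = 4 * Y + 2 * (\<Sum>r<5. int r * e r) + 2 * (\<Sum>r<5. y r) + 8 * k"
    using N by (elim dvdE) (simp add: algebra_simps)
  then have N_eq: "N = 2 * (Y mod 2) + (e 1 + 2 * e 2 + 3 * e 3 + 4 * e 4)
      - (e 0 + e 1 + e 2 + e 3 + e 4) div 2 + 4 * (Y div 2 + k)"
    using s by (simp add: sum_lessThan_5) presburger
  have "S = (\<Sum>r<5. y r) + e 0 + e 2 + e 4"
    by (simp add: S_def even_bead_balance5 e_def y_def)
  then have "N - S = (2 * (Y mod 2) + e 1 + 2 * e 2 + 3 * e 3 + 4 * e 4 - e 0 - e 2 - e 4)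
      + 4 * (Y div 2 + k)"
    using N_eq s by simp
  then have NS_mod: "(N - S) mod 4 = (2 * (Y mod 2) + e 1 + 2 * e 2 + 3 * e 3 + 4 * e 4 - e 0 - e 2 - e 4) mod 4"
    by (simp only: mod_mult_self2)
  have N_mod: "N mod 4 = (2 * (Y mod 2) + e 1 + 2 * e 2 + 3 * e 3 + 4 * e 4
      - (e 0 + e 1 + e 2 + e 3 + e 4) div 2) mod 4"
    using N_eq by (simp only: mod_mult_self2 add.assoc)
  have pattern: "e 0 = 0 \<and> e 1 = 1 \<and> e 2 = 0 \<and> e 3 = 1 \<and> e 4 = 0 \<longrightarrow> Y mod 2 = 0"
    by (simp add: Y_def sum_lessThan_5)
  have "Y mod 2 = 0 \<or> Y mod 2 = 1" by auto
  note table = srank_residue_table[OF e[of 0] e[of 1] e[of 2] e[of 3] e[of 4] this even_E pattern N_mod NS_mod]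
  have lift: "lift_parity a \<longleftrightarrow> e 0 = 0 \<and> e 1 = 1 \<and> e 2 = 0 \<and> e 3 = 1 \<and> e 4 = 0"
    by (simp add: lift_parity_def e_def even_iff_mod_2_eq_zero odd_iff_mod_2_eq_one)
  show "N mod 4 \<in> {0, 1} \<Longrightarrow> (N - S) mod 4 = 0"
    using table by auto
  show "N mod 4 = 2 \<Longrightarrow> (N - S) mod 4 \<noteq> 0"
    using table by auto
  show "N mod 4 = 3 \<Longrightarrow> (N - S) mod 4 = 0 \<longleftrightarrow> lift_parity a"
    using table unfolding lift by auto
qed

text \<open>Runner r goes to runner 2r + 3 mod 5 with its level doubled; the shifts on runners 1 and 3
  keep the level sum 0 and turn the quadratic form Q into 4 Q + 6.\<close>
definition lift_vector :: "(nat \<Rightarrow> int) \<Rightarrow> nat \<Rightarrow> int" where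
  "lift_vector a r = (if r = 0 then 2 * a 1 else if r = 1 then 2 * a 4 + 1 else if r = 2 then 2 * a 2
     else if r = 3 then 2 * a 0 - 1 else if r = 4 then 2 * a 3 else 0)"

definition unlift_vector :: "(nat \<Rightarrow> int) \<Rightarrow> nat \<Rightarrow> int" where
  "unlift_vector b r = (if r = 0 then (b 3 + 1) div 2 else if r = 1 then b 0 div 2
     else if r = 2 then b 2 div 2 else if r = 3 then b 4 div 2 else if r = 4 then (b 1 - 1) div 2 else 0)"

lemma lift_vector_core_vectors: "a \<in> core_vectors 5 \<Longrightarrow> lift_vector a \<in> core_vectors 5"
  by (auto simp: core_vectors_def lift_vector_def sum_lessThan_5)

lemma lift_parity_lift_vector: "lift_parity (lift_vector a)"
  by (simp add: lift_parity_def lift_vector_def)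

lemma double_size_lift_vector:
  assumes "a \<in> core_vectors 5"
  shows "double_size 5 (lift_vector a) = 4 * double_size 5 a + 6"
proof -
  have "a 4 = - (a 0 + a 1 + a 2 + a 3)"
    using assms by (simp add: core_vectors_def sum_lessThan_5)
  then show ?thesis
    by (simp add: double_size_def sum_lessThan_5 lift_vector_def algebra_simps)
qed

lemma unlift_lift_vector: "a \<in> core_vectors 5 \<Longrightarrow> unlift_vector (lift_vector a) = a"
  by (auto simp: fun_eq_iff unlift_vector_def lift_vector_def core_vectors_def)

lemma lift_unlift_vector:
  assumes "b \<in> core_vectors 5" "lift_parity b"
  shows "lift_vector (unlift_vector b) = b"
  using assms by (auto simp: fun_eq_iff unlift_vector_def lift_vector_def core_vectors_def
      lift_parity_def elim!: evenE oddE)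

lemma unlift_vector_core_vectors:
  assumes "b \<in> core_vectors 5" "lift_parity b"
  shows "unlift_vector b \<in> core_vectors 5"
proof -
  have "(\<Sum>r<5. lift_vector (unlift_vector b) r) = 0"
    using lift_unlift_vector[OF assms] assms(1) by (simp add: core_vectors_def)
  then show ?thesis
    by (simp add: core_vectors_def sum_lessThan_5 lift_vector_def unlift_vector_def)
qed

lemma card_lift_parity_core_vectors:
  "card {b \<in> core_vectors 5. double_size 5 b = 4 * Q + 6 \<and> lift_parity b} =
    card {a \<in> core_vectors 5. double_size 5 a = Q}"
proof -
  have "bij_betw lift_vector {a \<in> core_vectors 5. double_size 5 a = Q}
      {b \<in> core_vectors 5. double_size 5 b = 4 * Q + 6 \<and> lift_parity b}"
  proof (rule bij_betw_byWitness[where f' = unlift_vector])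
    show "lift_vector ` {a \<in> core_vectors 5. double_size 5 a = Q}
        \<subseteq> {b \<in> core_vectors 5. double_size 5 b = 4 * Q + 6 \<and> lift_parity b}"
      using lift_vector_core_vectors double_size_lift_vector lift_parity_lift_vector by auto
    show "unlift_vector ` {b \<in> core_vectors 5. double_size 5 b = 4 * Q + 6 \<and> lift_parity b}
        \<subseteq> {a \<in> core_vectors 5. double_size 5 a = Q}"
    proof clarify
      fix b
      assume b: "b \<in> core_vectors 5" "double_size 5 b = 4 * Q + 6" "lift_parity b"
      then have "4 * double_size 5 (unlift_vector b) + 6 = 4 * Q + 6"
        using double_size_lift_vector[OF unlift_vector_core_vectors[OF b(1,3)]]
          lift_unlift_vector[OF b(1,3)] by simp
      then show "unlift_vector b \<in> core_vectors 5 \<and> double_size 5 (unlift_vector b) = Q"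
        using unlift_vector_core_vectors[OF b(1,3)] by simp
    qed
  qed (auto simp: unlift_lift_vector lift_unlift_vector)
  then show ?thesis by (simp add: bij_betw_same_card)
qed

lemma a50_eq_a5_if_mod4_01:
  assumes "n mod 4 \<in> {0, 1}"
  shows "a50 n = a5 n"
proof -
  have "int n mod 4 \<in> {0, 1}"
    using assms by simp presburger
  then have "{a \<in> core_vectors 5. double_size 5 a = 2 * int n
      \<and> (int n - even_bead_balance 5 a) mod 4 = 0} = {a \<in> core_vectors 5. double_size 5 a = 2 * int n}"
    using core_vector5_mod4(1)[OF _ _ \<open>int n mod 4 \<in> {0, 1}\<close>] by auto
  then show ?thesis
    by (simp only: a50_eq_card_core_vectors a5_eq_card_core_vectors)
qed

lemma a50_eq_0_if_mod4_eq2: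
  assumes "n mod 4 = 2"
  shows "a50 n = 0"
proof -
  have "int n mod 4 = 2" using assms by presburger
  then have "{a \<in> core_vectors 5. double_size 5 a = 2 * int n
      \<and> (int n - even_bead_balance 5 a) mod 4 = 0} = {}"
    using core_vector5_mod4(2)[OF _ _ \<open>int n mod 4 = 2\<close>] by auto
  then show ?thesis
    by (simp only: a50_eq_card_core_vectors card.empty)
qed

lemma a50_4n3_eq_a5: "a50 (4 * n + 3) = a5 n"
proof -
  have "{a \<in> core_vectors 5. double_size 5 a = 2 * int (4 * n + 3) \<and> (int (4 * n + 3) - even_bead_balance 5 a) mod 4 = 0}
      = {b \<in> core_vectors 5. double_size 5 b = 4 * (2 * int n) + 6 \<and> lift_parity b}"
  proof (intro Collect_cong conj_cong)
    fix a
    assume "a \<in> core_vectors 5" "double_size 5 a = 4 * (2 * int n) + 6"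
    then show "(int (4 * n + 3) - even_bead_balance 5 a) mod 4 = 0 \<longleftrightarrow> lift_parity a"
      using core_vector5_mod4(3)[of a "int (4 * n + 3)"] by simp
  qed simp_all
  then show ?thesis
    by (simp only: a50_eq_card_core_vectors a5_eq_card_core_vectors card_lift_parity_core_vectors)
qed

theorem mainTheorem11:
  fixes n :: nat
  shows "a50 (4 * n) = a5 (4 * n) \<and> a50 (4 * n + 1) = a5 (4 * n + 1) \<and>
         a50 (4 * n + 2) = 0 \<and> a50 (4 * n + 3) = a5 n"
proof -
  have "(4 * n) mod 4 \<in> {0, 1}" "(4 * n + 1) mod 4 \<in> {0, 1}" "(4 * n + 2) mod 4 = 2"
    by simp_all presburger
  then show ?thesis
    using a50_eq_a5_if_mod4_01 a50_eq_0_if_mod4_eq2 a50_4n3_eq_a5 by presburger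
qed

end
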